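(* Let $n\ge 1$ and let $\mathbf{A},\mathbf{B}\in\mathbb{R}^{n\times n}$ be non-singular diagonalizable matrices such that: (i) $\mathbf{A}^q=a\mathbf{I}$ for some positive integer $q\le n$ and some scalar $a\neq 0$; (ii) $\mathbf{I}-a\mathbf{B}^q$ is nonsingular; (iii) the eigenvalues of $\mathbf{B}$ have pairwise distinct absolute values. Define $$S_{\mathbf{A},\mathbf{B}}=\{\mathbf{M}\in\mathbb{R}^{n\times n}\;:\;\exists\,\mathbf{g},\mathbf{h}\in\mathbb{R}^n \text{ with } \mathbf{M}-\mathbf{A}\mathbf{M}\mathbf{B}=\mathbf{g}\mathbf{h}^T\}.$$ Then for every vector $\mathbf{v}\in\mathbb{R}^n$ there exist a matrix $\mathbf{M}\in S_{\mathbf{A},\mathbf{B}}$ and an index $i\in\{1,\dots,n\}$ such that the $i$-th column of $\mathbf{M}$ equals $\mathbf{v}$.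
   Context: For $\mathbf{A},\mathbf{B}\in\mathbb{R}^{n\times n}$, the Stein displacement of $\mathbf{M}\in\mathbb{R}^{n\times n}$ is $\Delta_{\mathbf{A},\mathbf{B}}(\mathbf{M})=\mathbf{M}-\mathbf{A}\mathbf{M}\mathbf{B}$; $S_{\mathbf{A},\mathbf{B}}$ is the set of matrices whose Stein displacement is of the form $\mathbf{g}\mathbf{h}^T$ (rank at most one). *)

theory Defs
  imports "HOL-Analysis.Analysis"
begin

primrec matpow :: "'a::semiring_1 ^'n^'n \<Rightarrow> nat \<Rightarrow> 'a^'n^'n" where
  "matpow M 0 = mat 1"
| "matpow M (Suc k) = M ** matpow M k"

definition cmat :: "real^'n^'m \<Rightarrow> complex^'n^'m" where
  "cmat M = (\<chi> i j. complex_of_real (M $ i $ j))"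

definition diagonalizable :: "real^'n^'n \<Rightarrow> bool" where
  "diagonalizable M \<longleftrightarrow>
     (\<exists>P D :: complex^'n^'n. invertible P \<and> (\<forall>i j. i \<noteq> j \<longrightarrow> D $ i $ j = 0)
        \<and> cmat M = P ** D ** matrix_inv P)"

definition eigenvalues :: "real^'n^'n \<Rightarrow> complex set" where
  "eigenvalues M = {c. \<exists>x :: complex^'n. x \<noteq> 0 \<and> cmat M *v x = c *s x}"

definition outer :: "real^'n \<Rightarrow> real^'n \<Rightarrow> real^'n^'n" where
  "outer g h = (\<chi> i j. g $ i * h $ j)"

definition stein_disp :: "real^'n^'n \<Rightarrow> real^'n^'n \<Rightarrow> real^'n^'n \<Rightarrow> real^'n^'n" where
  "stein_disp A B M = M - A ** M ** B"

definition S_set :: "real^'n^'n \<Rightarrow> real^'n^'n \<Rightarrow> (real^'n^'n) set" where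
  "S_set A B = {M. \<exists>g h. stein_disp A B M = outer g h}"

end

theory Submission imports Defs begin

text \<open>
  If \<open>u\<^sup>T B = m u\<^sup>T\<close> then \<open>x u\<^sup>T - A x u\<^sup>T B = (x - m A x) u\<^sup>T\<close>, so every matrix \<open>x u\<^sup>T\<close> built on a
  real left eigenvector \<open>u\<close> of \<open>B\<close> lies in \<open>S_{A,B}\<close>; its \<open>i\<close>-th column is \<open>u\<^sub>i x\<close>, which is
  any prescribed vector once \<open>u\<^sub>i \<noteq> 0\<close>. A real eigenvalue of \<open>B\<close> exists because the spectrum
  of a real matrix is closed under conjugation and \<open>c\<close> and \<open>cnj c\<close> have the same modulus.
  Hence only the spectral hypotheses on \<open>B\<close> are needed.
\<close>

lemma matrix_mult_outer_mult:
  "A ** outer x u ** B = outer (A *v x) (u v* B)"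
proof -
  have "(A ** outer x u ** B) $ i $ j = (\<Sum>l\<in>UNIV. A$i$l * x$l) * (\<Sum>k\<in>UNIV. u$k * B$k$j)" for i j
    unfolding outer_def matrix_matrix_mult_def
    by (simp add: sum_product sum_distrib_left sum_distrib_right) (simp add: mult_ac)
  then show ?thesis
    by (simp add: outer_def vec_eq_iff matrix_vector_mult_def vector_matrix_mult_def)
qed

lemma column_outer: "column i (outer x u) = u $ i *s x"
  by (simp add: column_def outer_def vec_eq_iff mult.commute)

lemma stein_disp_outer_left_eigenvector:
  assumes "u v* B = m *s u"
  shows "stein_disp A B (outer x u) = outer (x - m *s (A *v x)) u"
  unfolding stein_disp_def matrix_mult_outer_mult assms
  by (simp add: outer_def vec_eq_iff matrix_vector_mult_def algebra_simps)

lemma outer_left_eigenvector_in_S_set: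
  assumes "u v* B = m *s u"
  shows "outer x u \<in> S_set A B"
  using stein_disp_outer_left_eigenvector[OF assms] unfolding S_set_def by blast

text \<open>A right eigenvalue is a left eigenvalue: both mean \<open>det (B - m I) = 0\<close>.\<close>

lemma left_eigenvector_exists:
  fixes B :: "real^'n^'n"
  assumes "y \<noteq> 0" and "B *v y = m *s y"
  obtains u where "u \<noteq> 0" and "u v* B = m *s u"
proof -
  have "mat m *v y = m *s y"
    by (simp add: vec_eq_iff matrix_vector_mult_def mat_def if_distrib[of "\<lambda>z. z * _"] cong: if_cong)
  with assms(2) have "(B - mat m) *v y = 0"
    by (simp add: matrix_vector_mult_diff_rdistrib)
  with assms(1) have "\<not> invertible (B - mat m)"
    by (metis invertible_left_inverse matrix_left_invertible_ker)
  then have "\<not> invertible (transpose (B - mat m))"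
    by (simp add: invertible_det_nz)
  then obtain u where "u \<noteq> 0" and "transpose (B - mat m) *v u = 0"
    by (metis invertible_left_inverse matrix_left_invertible_ker)
  moreover have "u v* mat m = m *s u"
    by (simp add: vec_eq_iff vector_matrix_mult_def mat_def if_distrib[of "\<lambda>z. _ * z"] cong: if_cong)
  ultimately show thesis
    using that by (simp add: vector_matrix_mult_diff_rdistrib)
qed

lemma cmat_mult_eigen_iff:
  "cmat B *v x = c *s x \<longleftrightarrow> (\<forall>i. (\<Sum>j\<in>UNIV. complex_of_real (B$i$j) * x$j) = c * x$i)"
  by (simp add: vec_eq_iff cmat_def matrix_vector_mult_def)

lemma cnj_mem_eigenvalues:
  assumes "c \<in> eigenvalues B"
  shows "cnj c \<in> eigenvalues B"
proof -
  obtain x where "x \<noteq> 0" and "cmat B *v x = c *s x"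
    using assms unfolding eigenvalues_def by blast
  then have x: "(\<Sum>j\<in>UNIV. complex_of_real (B$i$j) * x$j) = c * x$i" for i
    by (simp add: cmat_mult_eigen_iff)
  have "(\<chi> i. cnj (x$i)) \<noteq> 0"
    using \<open>x \<noteq> 0\<close> by (simp add: vec_eq_iff)
  moreover have "(\<Sum>j\<in>UNIV. complex_of_real (B$i$j) * cnj (x$j)) = cnj c * cnj (x$i)" for i
    using arg_cong[OF x[of i], of cnj] by (simp add: cnj_sum)
  then have "cmat B *v (\<chi> i. cnj (x$i)) = cnj c *s (\<chi> i. cnj (x$i))"
    by (simp add: cmat_mult_eigen_iff)
  ultimately show ?thesis
    unfolding eigenvalues_def by blast
qed

lemma real_eigenvector_exists:
  assumes "c \<in> eigenvalues B" and "Im c = 0"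
  obtains y where "y \<noteq> 0" and "B *v y = Re c *s y"
proof -
  obtain x where "x \<noteq> 0" and "cmat B *v x = c *s x"
    using assms(1) unfolding eigenvalues_def by blast
  then have x: "(\<Sum>j\<in>UNIV. complex_of_real (B$i$j) * x$j) = c * x$i" for i
    by (simp add: cmat_mult_eigen_iff)
  have "(\<Sum>j\<in>UNIV. B$i$j * Re (x$j)) = Re c * Re (x$i)" for i
    using arg_cong[OF x[of i], of Re] assms(2) by (simp add: Re_sum)
  then have "B *v (\<chi> i. Re (x$i)) = Re c *s (\<chi> i. Re (x$i))"
    by (simp add: vec_eq_iff matrix_vector_mult_def)
  moreover have "(\<Sum>j\<in>UNIV. B$i$j * Im (x$j)) = Re c * Im (x$i)" for i
    using arg_cong[OF x[of i], of Im] assms(2) by (simp add: Im_sum)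
  then have "B *v (\<chi> i. Im (x$i)) = Re c *s (\<chi> i. Im (x$i))"
    by (simp add: vec_eq_iff matrix_vector_mult_def)
  moreover have "(\<chi> i. Re (x$i)) \<noteq> 0 \<or> (\<chi> i. Im (x$i)) \<noteq> 0"
    using \<open>x \<noteq> 0\<close> by (auto simp: vec_eq_iff complex_eq_iff)
  ultimately show thesis
    using that by blast
qed

lemma eigenvalue_real_if_inj_on_cmod:
  assumes "inj_on cmod (eigenvalues B)" and "c \<in> eigenvalues B"
  shows "Im c = 0"
proof -
  have "cnj c = c"
    using assms cnj_mem_eigenvalues[OF assms(2)] by (simp add: inj_on_def)
  then show ?thesis
    by (metis cnj.simps(2) neg_equal_zero)
qed

theorem theorem1:
  fixes A B :: "real^'n^'n" and q :: nat and a :: real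
  assumes "invertible A" and "invertible B"
    and "diagonalizable A" and "diagonalizable B"
    and "0 < q" and "q \<le> CARD('n)" and "a \<noteq> 0" and "matpow A q = mat a"
    and "invertible (mat 1 - a *\<^sub>R matpow B q)"
    and "card (eigenvalues B) = CARD('n)"
    and "inj_on cmod (eigenvalues B)"
  shows "\<forall>v :: real^'n. \<exists>M \<in> S_set A B. \<exists>i. column i M = v"
proof
  fix v :: "real^'n"
  obtain c where c: "c \<in> eigenvalues B"
    using assms(10) by fastforce
  obtain y where "y \<noteq> 0" and "B *v y = Re c *s y"
    using real_eigenvector_exists[OF c eigenvalue_real_if_inj_on_cmod[OF assms(11) c]] .
  then obtain u where "u \<noteq> 0" and u: "u v* B = Re c *s u"
    by (rule left_eigenvector_exists)
  then obtain i where "u $ i \<noteq> 0"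
    by (auto simp: vec_eq_iff)
  then have "column i (outer ((1 / u $ i) *s v) u) = v"
    by (simp add: column_outer)
  then show "\<exists>M \<in> S_set A B. \<exists>i. column i M = v"
    using outer_left_eigenvector_in_S_set[OF u] by blast
qed

end
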